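(* Fix $\epsilon>0$, and let $k=k(n)$ satisfy $\frac kn<\min\left(\frac{\epsilon^2}4,\frac1{100}\right)$. Then \[\Pr\big(\exists v\in\mathcal L_k \text{ with } \Phi_{v,\tau_{k,\epsilon}}\ge\epsilon\big)=o\Big(\frac1n\Big),\] where $\tau_{k,\epsilon}=\frac{\epsilon}{4}\binom{n}{k+1}$.
   Context: Let $n\ge 1$ and $\mathcal B=\{0,1\}^n$ with the coordinatewise partial order; $\mathbf 0=(0,\dots,0)$, $\mathbf 1=(1,\dots,1)$, $|x|$ denotes the number of ones of $x$, and $\mathcal L_k=\{x\in\mathcal B:|x|=k\}$ is the $k$th level. A random decreasing walk from $\mathbf 1$ is a maximal chain $\mathbf 1=x_n>x_{n-1}>\dots>x_0=\mathbf 0$ with $x_i\in\mathcal L_i$, chosen uniformly among all $n!$ such chains (equivalently, each step turns a uniformly random remaining $1$ into $0$). The DLA process on $\mathcal B$: $C_0=\{\mathbf 0\}$; for $t\ge1$, let $\rho_t$ be a random decreasing walk from $\mathbf 1$, independent of everything before; let $v$ be the last vertex of the longest initial segment of $\rho_t$ that is disjoint from $C_{t-1}$, and set $C_t=C_{t-1}\cup\{v\}$. The process terminates at the first time $\tau_{\mathrm{end}}$ with $\mathbf 1\in C_{\tau_{\mathrm{end}}}$ (for $t>\tau_{\mathrm{end}}$ put $C_t=C_{\tau_{\mathrm{end}}}$). A vertex is occupied at time $t$ if it lies in $C_t$. For $v\in\mathcal B$ and time $t$, $\Phi_{v,t}$ is the fraction of monotone (saturated, decreasing) paths from $\mathbf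 1$ to $v$ that contain at least one vertex of $C_t$ other than $v$. Times are rounded to integers; asymptotics are as $n\to\infty$. *)

theory Defs
  imports "HOL-Probability.Probability" "HOL-Library.Landau_Symbols"
begin

text \<open>Vertices of the cube {0,1}^n are represented by the set of coordinates equal to 1,
  i.e. subsets of {0..<n}; |x| is card x, the level L_k is {x. x \<subseteq> {0..<n} \<and> card x = k},
  and \<one> = {0..<n}, \<zero> = {}.\<close>

definition cube_orders :: "nat \<Rightarrow> nat list set" where
  "cube_orders n = {\<sigma>. distinct \<sigma> \<and> set \<sigma> = {0..<n}}"

text \<open>A maximal decreasing chain from \<one> to \<zero>, encoded by the order \<sigma> in which the ones
  are turned into zeros: its vertices are x_n, x_{n-1}, ..., x_0.\<close>
definition walk_of :: "nat \<Rightarrow> nat list \<Rightarrow> nat set list" where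
  "walk_of n \<sigma> = map (\<lambda>j. {0..<n} - set (take j \<sigma>)) [0..<Suc n]"

definition random_walk :: "nat \<Rightarrow> nat set list pmf" where
  "random_walk n = map_pmf (walk_of n) (pmf_of_set (cube_orders n))"

definition dla_step :: "nat \<Rightarrow> nat set set \<Rightarrow> nat set set pmf" where
  "dla_step n C = (if {0..<n} \<in> C then return_pmf C
     else map_pmf (\<lambda>\<rho>. insert (last (takeWhile (\<lambda>x. x \<notin> C) \<rho>)) C) (random_walk n))"

fun dla :: "nat \<Rightarrow> nat \<Rightarrow> nat set set pmf" where
  "dla n 0 = return_pmf {{}}"
| "dla n (Suc t) = dla n t \<bind> dla_step n"

text \<open>Saturated decreasing paths from \<one> to v correspond to orders \<tau> of {0..<n} - v;
  vertices are {0..<n} - set (take j \<tau>) for j = 0..length \<tau> (the last being v).\<close>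
definition paths_to :: "nat \<Rightarrow> nat set \<Rightarrow> nat list set" where
  "paths_to n v = {\<tau>. distinct \<tau> \<and> set \<tau> = {0..<n} - v}"

definition Phi :: "nat \<Rightarrow> nat set set \<Rightarrow> nat set \<Rightarrow> real" where
  "Phi n C v = real (card {\<tau> \<in> paths_to n v. \<exists>j < length \<tau>. {0..<n} - set (take j \<tau>) \<in> C})
              / real (card (paths_to n v))"

definition level :: "nat \<Rightarrow> nat \<Rightarrow> nat set set" where
  "level n k = {x. x \<subseteq> {0..<n} \<and> card x = k}"

end

theory Submission
  imports Defs "HOL-Combinatorics.Multiset_Permutations"
begin

text \<open>
  For \<open>v\<close> on level \<open>k\<close>, an occupied \<open>w \<supset> v\<close> blocks a fraction \<open>1 / (n - k choose |w| - k)\<close> of the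
  saturated paths from \<open>\<one>\<close> to \<open>v\<close>, so \<open>\<Phi>\<^sub>v\<close> is at most the sum \<open>S\<^sub>v\<close> of these fractions.
  A uniform walk passes through a given \<open>w\<close> with probability \<open>1 / (n choose |w|)\<close>, and only then can it
  deposit at \<open>w\<close>. Hence, while the cluster stays below level \<open>h = n / 3\<close>, \<open>exp (\<lambda> S\<^sub>v)\<close> grows in
  expectation by a factor \<open>1 + O(\<lambda> / (n choose k + 1))\<close> per step; with \<open>\<lambda> = 3/4 (n - k)\<close> and
  Markov's inequality, \<open>S\<^sub>v \<ge> \<epsilon>\<close> at time \<open>\<epsilon>/4 (n choose k + 1)\<close> has probability \<open>exp (-0.335 \<epsilon> n)\<close>,
  which beats the \<open>n choose k \<le> exp (n a (1 - ln a))\<close> choices of \<open>v\<close> for \<open>k / n < a\<close>.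
  To reach level \<open>k + 1 + m\<close>, each new level needs a walk through an occupied vertex of the level
  below, so the expected level counts grow like \<open>t ^ (m + 1) / ((m + 1)! (n choose k + 1) ^ m)\<close>, which is
  super-exponentially small for \<open>m \<approx> n / 4\<close>.
\<close>

section \<open>Orders, chains and saturated paths\<close>

lemma cube_orders_eq_permutations: "cube_orders n = permutations_of_set {0..<n}"
  by (auto simp: cube_orders_def permutations_of_set_def)

lemma paths_to_eq_permutations: "paths_to n v = permutations_of_set ({0..<n} - v)"
  by (auto simp: paths_to_def permutations_of_set_def)

lemma finite_cube_orders: "finite (cube_orders n)"
  by (simp add: cube_orders_eq_permutations)

lemma cube_orders_nonempty: "cube_orders n \<noteq> {}"
  by (simp add: cube_orders_eq_permutations)

lemma card_cube_orders: "card (cube_orders n) = fact n"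
  by (simp add: cube_orders_eq_permutations)

lemma length_cube_order: "\<sigma> \<in> cube_orders n \<Longrightarrow> length \<sigma> = n"
  by (auto simp: cube_orders_def dest: distinct_card)

lemma card_subset_atLeast0LessThan: "w \<subseteq> {0..<n} \<Longrightarrow> card w \<le> n"
  using card_mono[of "{0..<n}" w] by simp

lemma permutations_of_set_prefix_eq:
  assumes "B \<subseteq> A"
  shows "{\<tau> \<in> permutations_of_set A. set (take (card B) \<tau>) = B}
           = (\<lambda>(xs, ys). xs @ ys) ` (permutations_of_set B \<times> permutations_of_set (A - B))"
proof (intro equalityI subsetI)
  fix \<tau> assume "\<tau> \<in> {\<tau> \<in> permutations_of_set A. set (take (card B) \<tau>) = B}"
  hence \<tau>: "distinct \<tau>" "set \<tau> = A" "set (take (card B) \<tau>) = B"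
    by (auto simp: permutations_of_set_def)
  have "set \<tau> = set (take (card B) \<tau>) \<union> set (drop (card B) \<tau>)"
    by (metis set_append append_take_drop_id)
  moreover have "set (take (card B) \<tau>) \<inter> set (drop (card B) \<tau>) = {}"
    using \<tau>(1) by (metis append_take_drop_id distinct_append)
  ultimately have "set (drop (card B) \<tau>) = A - B" using \<tau> by blast
  hence "(take (card B) \<tau>, drop (card B) \<tau>) \<in> permutations_of_set B \<times> permutations_of_set (A - B)"
    using \<tau> by (auto simp: permutations_of_set_def)
  thus "\<tau> \<in> (\<lambda>(xs, ys). xs @ ys) ` (permutations_of_set B \<times> permutations_of_set (A - B))"
    by (intro image_eqI[where x = "(take (card B) \<tau>, drop (card B) \<tau>)"]) auto
next
  fix \<tau> assume "\<tau> \<in> (\<lambda>(xs, ys). xs @ ys) ` (permutations_of_set B \<times> permutations_of_set (A - B))"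
  then obtain xs ys where "\<tau> = xs @ ys" "set xs = B" "distinct xs" "set ys = A - B" "distinct ys"
    by (auto simp: permutations_of_set_def)
  moreover have "length xs = card B" using calculation distinct_card by metis
  ultimately show "\<tau> \<in> {\<tau> \<in> permutations_of_set A. set (take (card B) \<tau>) = B}"
    using assms by (auto simp: permutations_of_set_def)
qed

lemma card_permutations_of_set_prefix:
  assumes "finite A" "B \<subseteq> A"
  shows "card {\<tau> \<in> permutations_of_set A. set (take (card B) \<tau>) = B}
           = fact (card B) * fact (card A - card B)"
proof -
  let ?P = "permutations_of_set B \<times> permutations_of_set (A - B)"
  have "inj_on (\<lambda>(xs, ys). xs @ ys) ?P"
  proof (rule inj_onI, clarsimp)
    fix xs ys xs' ys'
    assume "xs \<in> permutations_of_set B" "xs' \<in> permutations_of_set B" "xs @ ys = xs' @ ys'"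
    moreover have "length xs = length xs'"
      using calculation by (metis permutations_of_setD distinct_card)
    ultimately show "xs = xs' \<and> ys = ys'" by auto
  qed
  hence "card ((\<lambda>(xs, ys). xs @ ys) ` ?P) = card (permutations_of_set B) * card (permutations_of_set (A - B))"
    by (simp add: card_image card_cartesian_product)
  thus ?thesis
    using assms finite_subset[OF assms(2,1)] by (simp add: permutations_of_set_prefix_eq card_Diff_subset)
qed

definition chain_vertex :: "nat \<Rightarrow> nat list \<Rightarrow> nat \<Rightarrow> nat set" where
  "chain_vertex n \<sigma> i = {0..<n} - set (take i \<sigma>)"

lemma chain_vertex_subset: "chain_vertex n \<sigma> i \<subseteq> {0..<n}"
  by (auto simp: chain_vertex_def)

lemma chain_vertex_0: "chain_vertex n \<sigma> 0 = {0..<n}"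
  by (simp add: chain_vertex_def)

lemma chain_vertex_last: "\<sigma> \<in> cube_orders n \<Longrightarrow> chain_vertex n \<sigma> n = {}"
  using length_cube_order[of \<sigma> n] by (auto simp: chain_vertex_def cube_orders_def)

lemma card_chain_vertex:
  assumes "\<sigma> \<in> cube_orders n" "i \<le> n"
  shows "card (chain_vertex n \<sigma> i) = n - i"
proof -
  have "distinct \<sigma>" "set \<sigma> = {0..<n}" "length \<sigma> = n"
    using assms length_cube_order by (auto simp: cube_orders_def)
  hence "set (take i \<sigma>) \<subseteq> {0..<n}" "card (set (take i \<sigma>)) = i"
    using assms by (auto simp: distinct_card dest: in_set_takeD)
  thus ?thesis unfolding chain_vertex_def by (simp add: card_Diff_subset)
qed

lemma nth_walk_of: "i \<le> n \<Longrightarrow> walk_of n \<sigma> ! i = chain_vertex n \<sigma> i"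
  by (simp add: walk_of_def chain_vertex_def nth_map less_Suc_eq_le del: upt_Suc)

lemma length_walk_of: "length (walk_of n \<sigma>) = Suc n"
  by (simp add: walk_of_def)

lemma card_permutations_through:
  assumes A: "A \<subseteq> {0..<n}" and w: "w \<subseteq> {0..<n}" "{0..<n} - w \<subseteq> A"
  shows "card {\<tau> \<in> permutations_of_set A. chain_vertex n \<tau> (n - card w) = w}
           = fact (n - card w) * fact (card A - (n - card w))"
proof -
  have "finite w" using w finite_subset by blast
  hence card_compl: "card ({0..<n} - w) = n - card w" using w by (simp add: card_Diff_subset)
  have "{\<tau> \<in> permutations_of_set A. chain_vertex n \<tau> (n - card w) = w}
      = {\<tau> \<in> permutations_of_set A. set (take (card ({0..<n} - w)) \<tau>) = {0..<n} - w}"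
  proof (intro Collect_cong conj_cong refl)
    fix \<tau> assume "\<tau> \<in> permutations_of_set A"
    hence "set (take (n - card w) \<tau>) \<subseteq> {0..<n}"
      using A by (auto simp: permutations_of_set_def dest: in_set_takeD)
    thus "chain_vertex n \<tau> (n - card w) = w \<longleftrightarrow> set (take (card ({0..<n} - w)) \<tau>) = {0..<n} - w"
      unfolding chain_vertex_def card_compl using w by auto
  qed
  thus ?thesis
    using card_permutations_of_set_prefix[of A "{0..<n} - w"] w A card_compl finite_subset[OF A]
    by auto
qed

lemma card_cube_orders_through:
  assumes "w \<subseteq> {0..<n}"
  shows "real (card {\<sigma> \<in> cube_orders n. chain_vertex n \<sigma> (n - card w) = w}) / real (card (cube_orders n))
         = 1 / real (n choose card w)"
proof -
  have w: "card w \<le> n" using assms by (rule card_subset_atLeast0LessThan)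
  have "card {\<sigma> \<in> cube_orders n. chain_vertex n \<sigma> (n - card w) = w} = fact (n - card w) * fact (card w)"
    unfolding cube_orders_eq_permutations using card_permutations_through[of "{0..<n}" n w] assms w
    by simp
  moreover have "real (fact n) = fact (card w) * fact (n - card w) * real (n choose card w)"
    using binomial_fact_lemma[OF w] by (metis of_nat_fact of_nat_mult)
  ultimately show ?thesis unfolding card_cube_orders by (simp add: field_simps)
qed

lemma card_paths_through:
  assumes "v \<subseteq> w" "w \<subseteq> {0..<n}"
  shows "real (card {\<tau> \<in> paths_to n v. chain_vertex n \<tau> (n - card w) = w}) / real (card (paths_to n v))
         = 1 / real ((n - card v) choose (card w - card v))"
proof -
  have "finite w" using assms finite_subset by blast
  hence vw: "card v \<le> card w" and wn: "card w \<le> n"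
    using assms card_mono card_subset_atLeast0LessThan by auto
  have card_compl: "card ({0..<n} - v) = n - card v"
    using assms \<open>finite w\<close> finite_subset by (subst card_Diff_subset) auto
  have "card {\<tau> \<in> paths_to n v. chain_vertex n \<tau> (n - card w) = w}
      = fact (n - card w) * fact (card ({0..<n} - v) - (n - card w))"
    unfolding paths_to_eq_permutations by (rule card_permutations_through) (use assms in auto)
  also have "card ({0..<n} - v) - (n - card w) = card w - card v" using card_compl vw wn by simp
  finally have "card {\<tau> \<in> paths_to n v. chain_vertex n \<tau> (n - card w) = w}
      = fact (n - card w) * fact (card w - card v)" .
  moreover have "real (fact (n - card v)) = real (fact (card w - card v)) * real (fact (n - card w))
                   * real ((n - card v) choose (card w - card v))"
  proof -
    have "fact (card w - card v) * fact (n - card v - (card w - card v))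
            * ((n - card v) choose (card w - card v)) = fact (n - card v)"
      by (rule binomial_fact_lemma) (use wn in simp)
    moreover have "n - card v - (card w - card v) = n - card w" using vw wn by simp
    ultimately show ?thesis by (metis of_nat_mult)
  qed
  moreover have "(n - card v) choose (card w - card v) > 0" using vw wn by simp
  ultimately show ?thesis
    unfolding paths_to_eq_permutations card_permutations_of_set by (simp add: card_compl field_simps)
qed

lemma chain_vertex_of_path:
  assumes \<tau>: "\<tau> \<in> paths_to n v" and v: "v \<subseteq> {0..<n}" and j: "j < length \<tau>"
  shows "v \<subset> chain_vertex n \<tau> j" "card (chain_vertex n \<tau> j) = n - j"
proof -
  have \<tau>': "distinct \<tau>" "set \<tau> = {0..<n} - v" using \<tau> by (auto simp: paths_to_def)
  have "finite v" using v finite_subset by blast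
  hence "length \<tau> = n - card v" using \<tau>' v by (metis distinct_card card_Diff_subset card_atLeastLessThan diff_zero)
  have take: "set (take j \<tau>) \<subseteq> {0..<n} - v" "card (set (take j \<tau>)) = j"
    using \<tau>' j by (auto simp: distinct_card dest: in_set_takeD)
  thus card: "card (chain_vertex n \<tau> j) = n - j"
    unfolding chain_vertex_def by (subst card_Diff_subset) (auto intro: finite_subset)
  have "v \<subseteq> chain_vertex n \<tau> j" using take v by (auto simp: chain_vertex_def)
  moreover have "card v < card (chain_vertex n \<tau> j)" using card j \<open>length \<tau> = n - card v\<close> by simp
  ultimately show "v \<subset> chain_vertex n \<tau> j" by auto
qed

section \<open>The DLA process\<close>

definition deposit :: "nat set set \<Rightarrow> nat set list \<Rightarrow> nat set" where
  "deposit C \<rho> = last (takeWhile (\<lambda>x. x \<notin> C) \<rho>)"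

lemma dla_step_eq:
  "{0..<n} \<notin> C \<Longrightarrow> dla_step n C =
     map_pmf (\<lambda>\<sigma>. insert (deposit C (walk_of n \<sigma>)) C) (pmf_of_set (cube_orders n))"
  by (simp add: dla_step_def random_walk_def map_pmf_comp deposit_def)

definition dla_state :: "nat \<Rightarrow> nat set set \<Rightarrow> bool" where
  "dla_state n C \<longleftrightarrow> {} \<in> C \<and> (\<forall>w\<in>C. w \<subseteq> {0..<n})"

lemma finite_dla_state: "dla_state n C \<Longrightarrow> finite C"
  by (rule finite_subset[of _ "Pow {0..<n}"]) (auto simp: dla_state_def)

text \<open>The walk stops right before its first occupied vertex, which is therefore an occupied
  neighbour of the deposited vertex one level lower on the same walk.\<close>

lemma deposit_on_walk:
  assumes \<sigma>: "\<sigma> \<in> cube_orders n" and C: "dla_state n C" "{0..<n} \<notin> C"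
  defines "d \<equiv> deposit C (walk_of n \<sigma>)"
  shows "d \<notin> C" "d \<subseteq> {0..<n}" "0 < card d" "chain_vertex n \<sigma> (n - card d) = d"
    and "\<exists>u\<in>C. card u = card d - 1 \<and> chain_vertex n \<sigma> (n - card u) = u"
proof -
  define L where "L = (LEAST i. chain_vertex n \<sigma> i \<in> C)"
  have "chain_vertex n \<sigma> n \<in> C" using chain_vertex_last[OF \<sigma>] C by (simp add: dla_state_def)
  hence L: "L \<le> n" "chain_vertex n \<sigma> L \<in> C" "\<And>i. i < L \<Longrightarrow> chain_vertex n \<sigma> i \<notin> C"
    unfolding L_def by (auto intro: Least_le LeastI dest: not_less_Least)
  have "L \<noteq> 0" using L(2) C(2) chain_vertex_0 by metis
  have "takeWhile (\<lambda>x. x \<notin> C) (walk_of n \<sigma>) = take L (walk_of n \<sigma>)"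
    by (rule takeWhile_eq_take_P_nth) (use L in \<open>auto simp: length_walk_of nth_walk_of\<close>)
  also have "\<dots> = take (L - 1) (walk_of n \<sigma>) @ [walk_of n \<sigma> ! (L - 1)]"
  proof -
    have "L - 1 < length (walk_of n \<sigma>)" using L(1) by (simp add: length_walk_of)
    from take_Suc_conv_app_nth[OF this] show ?thesis using \<open>L \<noteq> 0\<close> by simp
  qed
  finally have d: "d = chain_vertex n \<sigma> (L - 1)"
    using L(1) unfolding d_def deposit_def by (simp add: nth_walk_of)
  have card_d: "card d = n - (L - 1)" using d card_chain_vertex[OF \<sigma>] L(1) by simp
  show "d \<notin> C" using d L(3) \<open>L \<noteq> 0\<close> by simp
  show "d \<subseteq> {0..<n}" using d chain_vertex_subset by simp
  show "0 < card d" using card_d L(1) \<open>L \<noteq> 0\<close> by simp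
  show "chain_vertex n \<sigma> (n - card d) = d" using card_d d L(1) \<open>L \<noteq> 0\<close> by simp
  have "card (chain_vertex n \<sigma> L) = n - L" using card_chain_vertex[OF \<sigma> L(1)] .
  thus "\<exists>u\<in>C. card u = card d - 1 \<and> chain_vertex n \<sigma> (n - card u) = u"
    using L card_d \<open>L \<noteq> 0\<close> by (intro bexI[of _ "chain_vertex n \<sigma> L"]) auto
qed

lemma set_pmf_dla_step:
  assumes "dla_state n C" "C' \<in> set_pmf (dla_step n C)"
  shows "dla_state n C'" "C \<subseteq> C'"
proof (atomize (full), cases "{0..<n} \<in> C")
  case True thus "dla_state n C' \<and> C \<subseteq> C'" using assms by (simp add: dla_step_def)
next
  case False
  then obtain \<sigma> where "\<sigma> \<in> cube_orders n" "C' = insert (deposit C (walk_of n \<sigma>)) C"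
    using assms(2) finite_cube_orders cube_orders_nonempty by (auto simp: dla_step_eq)
  thus "dla_state n C' \<and> C \<subseteq> C'"
    using deposit_on_walk(2)[of \<sigma> n C] assms(1) False by (auto simp: dla_state_def)
qed

lemma dla_state_dla: "C \<in> set_pmf (dla n t) \<Longrightarrow> dla_state n C"
proof (induction t arbitrary: C)
  case 0 thus ?case by (simp add: dla_state_def)
next
  case (Suc t) thus ?case by (auto intro: set_pmf_dla_step(1))
qed

section \<open>Bounding \<open>\<Phi>\<close> by the blocking weight\<close>

definition blocking_weight :: "nat \<Rightarrow> nat set \<Rightarrow> nat set set \<Rightarrow> real" where
  "blocking_weight n v C =
     (\<Sum>w\<in>{w\<in>C. v \<subset> w \<and> w \<subseteq> {0..<n}}. 1 / real ((n - card v) choose (card w - card v)))"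

lemma Phi_le_blocking_weight:
  assumes v: "v \<subseteq> {0..<n}"
  shows "Phi n C v \<le> blocking_weight n v C"
proof -
  let ?W = "{w\<in>C. v \<subset> w \<and> w \<subseteq> {0..<n}}"
  let ?blocked = "{\<tau> \<in> paths_to n v. \<exists>j < length \<tau>. {0..<n} - set (take j \<tau>) \<in> C}"
  let ?through = "\<lambda>w. {\<tau> \<in> paths_to n v. chain_vertex n \<tau> (n - card w) = w}"
  have fin: "finite ?W" "finite (paths_to n v)"
    by (rule finite_subset[of _ "Pow {0..<n}"]) (auto simp: paths_to_eq_permutations)
  have "?blocked \<subseteq> (\<Union>w\<in>?W. ?through w)"
  proof
    fix \<tau> assume "\<tau> \<in> ?blocked"
    then obtain j where \<tau>: "\<tau> \<in> paths_to n v" and j: "j < length \<tau>" "chain_vertex n \<tau> j \<in> C"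
      unfolding chain_vertex_def by auto
    have "distinct \<tau>" "set \<tau> = {0..<n} - v" using \<tau> by (auto simp: paths_to_def)
    hence "length \<tau> = card ({0..<n} - v)" by (metis distinct_card)
    hence "j \<le> n" using j card_subset_atLeast0LessThan[of "{0..<n} - v" n] by auto
    thus "\<tau> \<in> (\<Union>w\<in>?W. ?through w)"
      using \<tau> j chain_vertex_of_path[OF \<tau> v j(1)] chain_vertex_subset
      by (intro UN_I[of "chain_vertex n \<tau> j"]) auto
  qed
  hence "card ?blocked \<le> card (\<Union>w\<in>?W. ?through w)"
    by (rule card_mono[rotated]) (use fin in auto)
  also have "\<dots> \<le> (\<Sum>w\<in>?W. card (?through w))" by (rule card_UN_le[OF fin(1)])
  finally have "card ?blocked \<le> (\<Sum>w\<in>?W. card (?through w))" .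
  hence "Phi n C v \<le> (\<Sum>w\<in>?W. real (card (?through w))) / real (card (paths_to n v))"
    unfolding Phi_def by (intro divide_right_mono) (simp_all flip: of_nat_sum)
  also have "\<dots> = blocking_weight n v C"
    unfolding blocking_weight_def sum_divide_distrib by (intro sum.cong refl card_paths_through) auto
  finally show ?thesis .
qed

lemma Phi_le_1: "Phi n C v \<le> 1"
proof -
  have "card {\<tau> \<in> paths_to n v. \<exists>j < length \<tau>. {0..<n} - set (take j \<tau>) \<in> C} \<le> card (paths_to n v)"
    by (rule card_mono) (auto simp: paths_to_eq_permutations)
  thus ?thesis unfolding Phi_def by (cases "card (paths_to n v) = 0") auto
qed

lemma nn_integral_dla_step_le:
  assumes C: "{0..<n} \<notin> C"
    and g: "\<And>\<sigma>. \<sigma> \<in> cube_orders n \<Longrightarrow> g (insert (deposit C (walk_of n \<sigma>)) C) \<le> ennreal (f \<sigma>)"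
    and f: "\<And>\<sigma>. \<sigma> \<in> cube_orders n \<Longrightarrow> 0 \<le> f \<sigma>"
  shows "(\<integral>\<^sup>+C'. g C' \<partial>dla_step n C) \<le> ennreal ((\<Sum>\<sigma>\<in>cube_orders n. f \<sigma>) / card (cube_orders n))"
proof -
  let ?S = "cube_orders n"
  have "(\<integral>\<^sup>+C'. g C' \<partial>dla_step n C) = (\<integral>\<^sup>+\<sigma>. g (insert (deposit C (walk_of n \<sigma>)) C) \<partial>pmf_of_set ?S)"
    using C by (simp add: dla_step_eq)
  also have "\<dots> \<le> (\<integral>\<^sup>+\<sigma>. ennreal (f \<sigma>) \<partial>pmf_of_set ?S)"
    by (intro nn_integral_mono_AE AE_pmfI g)
      (use finite_cube_orders cube_orders_nonempty in simp)
  also have "\<dots> = ennreal ((\<Sum>\<sigma>\<in>?S. f \<sigma>) / card ?S)"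
    using finite_cube_orders cube_orders_nonempty f
    by (simp add: nn_integral_pmf_of_set sum_ennreal sum_nonneg divide_ennreal
        ennreal_of_nat_eq_real_of_nat card_gt_0_iff)
  finally show ?thesis .
qed

lemma average_walks_through:
  assumes W: "finite W" "\<And>w. w \<in> W \<Longrightarrow> w \<subseteq> {0..<n}"
  shows "(\<Sum>\<sigma>\<in>cube_orders n. \<Sum>w\<in>W. of_bool (chain_vertex n \<sigma> (n - card w) = w) * a w)
           / card (cube_orders n)
         = (\<Sum>w\<in>W. a w / real (n choose card w))"
proof -
  let ?S = "cube_orders n" and ?through = "\<lambda>w. {\<sigma> \<in> cube_orders n. chain_vertex n \<sigma> (n - card w) = w}"
  have "(\<Sum>\<sigma>\<in>?S. \<Sum>w\<in>W. of_bool (chain_vertex n \<sigma> (n - card w) = w) * a w)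
      = (\<Sum>w\<in>W. real (card (?through w)) * a w)"
    by (subst sum.swap) (simp add: finite_cube_orders Int_def)
  also have "\<dots> / card ?S = (\<Sum>w\<in>W. a w * (real (card (?through w)) / card ?S))"
    by (simp add: sum_divide_distrib mult.commute)
  also have "\<dots> = (\<Sum>w\<in>W. a w / real (n choose card w))"
    by (intro sum.cong refl) (simp add: card_cube_orders_through W(2))
  finally show ?thesis .
qed

lemma nn_integral_dla_Suc_le:
  fixes f g :: "nat set set \<Rightarrow> real"
  assumes step: "\<And>C. dla_state n C \<Longrightarrow> (\<integral>\<^sup>+C'. ennreal (f C') \<partial>dla_step n C) \<le> ennreal (c * f C + g C)"
    and nonneg: "0 \<le> c" "\<And>C. 0 \<le> f C" "\<And>C. 0 \<le> g C"
  shows "(\<integral>\<^sup>+C. ennreal (f C) \<partial>dla n (Suc t))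
           \<le> ennreal c * (\<integral>\<^sup>+C. ennreal (f C) \<partial>dla n t) + (\<integral>\<^sup>+C. ennreal (g C) \<partial>dla n t)"
proof -
  have "(\<integral>\<^sup>+C. ennreal (f C) \<partial>dla n (Suc t))
      = (\<integral>\<^sup>+C. (\<integral>\<^sup>+C'. ennreal (f C') \<partial>dla_step n C) \<partial>dla n t)" by simp
  also have "\<dots> \<le> (\<integral>\<^sup>+C. ennreal c * ennreal (f C) + ennreal (g C) \<partial>dla n t)"
    by (intro nn_integral_mono_AE AE_pmfI)
      (use step dla_state_dla nonneg in \<open>simp add: ennreal_plus ennreal_mult\<close>)
  also have "\<dots> = ennreal c * (\<integral>\<^sup>+C. ennreal (f C) \<partial>dla n t) + (\<integral>\<^sup>+C. ennreal (g C) \<partial>dla n t)"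
    by (simp add: nn_integral_add nn_integral_cmult)
  finally show ?thesis .
qed

section \<open>The exponential blocking weight\<close>

definition vertices_between :: "nat \<Rightarrow> nat set \<Rightarrow> nat \<Rightarrow> nat set set" where
  "vertices_between n v h = {w. v \<subset> w \<and> w \<subseteq> {0..<n} \<and> card w < h}"

definition blocking_jump :: "nat \<Rightarrow> nat set \<Rightarrow> real \<Rightarrow> nat set \<Rightarrow> real" where
  "blocking_jump n v lam w = exp (lam / real ((n - card v) choose (card w - card v))) - 1"

definition exp_blocking :: "nat \<Rightarrow> nat set \<Rightarrow> nat \<Rightarrow> real \<Rightarrow> nat set set \<Rightarrow> real" where
  "exp_blocking n v h lam C = (if \<forall>w\<in>C. card w < h then exp (lam * blocking_weight n v C) else 0)"

definition blocking_growth :: "nat \<Rightarrow> nat set \<Rightarrow> nat \<Rightarrow> real \<Rightarrow> real" where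
  "blocking_growth n v h lam = 1 + (\<Sum>w\<in>vertices_between n v h. blocking_jump n v lam w / real (n choose card w))"

lemma finite_vertices_between: "finite (vertices_between n v h)"
  by (rule finite_subset[of _ "Pow {0..<n}"]) (auto simp: vertices_between_def)

lemma blocking_jump_nonneg: "0 \<le> lam \<Longrightarrow> 0 \<le> blocking_jump n v lam w"
  by (simp add: blocking_jump_def)

lemma blocking_growth_nonneg: "0 \<le> lam \<Longrightarrow> 0 \<le> blocking_growth n v h lam"
  unfolding blocking_growth_def by (intro add_nonneg_nonneg sum_nonneg) (auto simp: blocking_jump_nonneg)

lemma blocking_weight_insert:
  assumes "d \<notin> C" "d \<subseteq> {0..<n}"
  shows "blocking_weight n v (insert d C) = blocking_weight n v C
           + (if v \<subset> d then 1 / real ((n - card v) choose (card d - card v)) else 0)"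
proof -
  have "finite {w\<in>C. v \<subset> w \<and> w \<subseteq> {0..<n}}" by (rule finite_subset[of _ "Pow {0..<n}"]) auto
  moreover have "{w\<in>insert d C. v \<subset> w \<and> w \<subseteq> {0..<n}}
      = (if v \<subset> d then insert d else id) {w\<in>C. v \<subset> w \<and> w \<subseteq> {0..<n}}"
    using assms by auto
  ultimately show ?thesis using assms(1) unfolding blocking_weight_def by (simp add: add.commute)
qed

lemma exp_blocking_deposit_le:
  assumes \<sigma>: "\<sigma> \<in> cube_orders n" and C: "dla_state n C" "\<forall>w\<in>C. card w < h"
    and h: "h \<le> n" and lam: "0 \<le> lam"
  shows "exp_blocking n v h lam (insert (deposit C (walk_of n \<sigma>)) C)
    \<le> exp (lam * blocking_weight n v C)
        * (1 + (\<Sum>w\<in>vertices_between n v h. of_bool (chain_vertex n \<sigma> (n - card w) = w) * blocking_jump n v lam w))"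
    (is "_ \<le> ?E * (1 + ?sum)")
proof -
  define d where "d = deposit C (walk_of n \<sigma>)"
  have "{0..<n} \<notin> C" using C(2) h by fastforce
  note d = deposit_on_walk[OF \<sigma> C(1) this, folded d_def]
  have sum: "0 \<le> ?sum" using lam by (intro sum_nonneg) (simp add: blocking_jump_nonneg)
  show ?thesis
  proof (cases "card d < h \<and> v \<subset> d")
    case True
    hence "d \<in> vertices_between n v h" using d(2) by (simp add: vertices_between_def)
    hence "blocking_jump n v lam d \<le> ?sum"
      using d(4) lam finite_vertices_between blocking_jump_nonneg
      by (intro member_le_sum[of d, THEN order.trans[rotated]]) auto
    moreover have "exp_blocking n v h lam (insert d C) = ?E * (1 + blocking_jump n v lam d)"
      using True C(2) blocking_weight_insert[OF d(1,2), of v]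
      by (simp add: exp_blocking_def blocking_jump_def distrib_left exp_add)
    ultimately show ?thesis unfolding d_def by simp
  next
    case False
    hence "exp_blocking n v h lam (insert d C) \<le> ?E"
      using C(2) blocking_weight_insert[OF d(1,2), of v] by (auto simp: exp_blocking_def)
    also have "\<dots> \<le> ?E * (1 + ?sum)" using sum by simp
    finally show ?thesis unfolding d_def .
  qed
qed

lemma exp_blocking_step:
  assumes C: "dla_state n C" and h: "h \<le> n" and lam: "0 \<le> lam"
  shows "(\<integral>\<^sup>+C'. ennreal (exp_blocking n v h lam C') \<partial>dla_step n C)
           \<le> ennreal (blocking_growth n v h lam * exp_blocking n v h lam C)"
proof (cases "\<forall>w\<in>C. card w < h")
  case False
  have "(\<integral>\<^sup>+C'. ennreal (exp_blocking n v h lam C') \<partial>dla_step n C) = (\<integral>\<^sup>+C'. 0 \<partial>dla_step n C)"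
  proof (intro nn_integral_cong_AE AE_pmfI)
    fix C' assume "C' \<in> set_pmf (dla_step n C)"
    hence "\<not> (\<forall>w\<in>C'. card w < h)" using False set_pmf_dla_step(2)[OF C] by blast
    thus "ennreal (exp_blocking n v h lam C') = 0" by (simp add: exp_blocking_def)
  qed
  thus ?thesis by simp
next
  case True
  let ?E = "exp (lam * blocking_weight n v C)" and ?W = "vertices_between n v h"
  let ?through = "\<lambda>\<sigma> w. of_bool (chain_vertex n \<sigma> (n - card w) = w) :: real"
  have "{0..<n} \<notin> C" using True h by fastforce
  hence "(\<integral>\<^sup>+C'. ennreal (exp_blocking n v h lam C') \<partial>dla_step n C)
      \<le> ennreal ((\<Sum>\<sigma>\<in>cube_orders n. ?E * (1 + (\<Sum>w\<in>?W. ?through \<sigma> w * blocking_jump n v lam w)))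
                  / card (cube_orders n))"
    using exp_blocking_deposit_le[OF _ C True h lam] lam
    by (intro nn_integral_dla_step_le ennreal_leI)
      (auto intro!: mult_nonneg_nonneg add_nonneg_nonneg sum_nonneg simp: blocking_jump_nonneg)
  also have "(\<Sum>\<sigma>\<in>cube_orders n. ?E * (1 + (\<Sum>w\<in>?W. ?through \<sigma> w * blocking_jump n v lam w)))
               / card (cube_orders n)
      = ?E * (1 + (\<Sum>\<sigma>\<in>cube_orders n. \<Sum>w\<in>?W. ?through \<sigma> w * blocking_jump n v lam w)
                  / card (cube_orders n))"
    using finite_cube_orders cube_orders_nonempty
    by (simp add: sum.distrib sum_distrib_left[symmetric] field_simps card_gt_0_iff)
  also have "\<dots> = blocking_growth n v h lam * exp_blocking n v h lam C"
    using True by (subst average_walks_through)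
      (auto simp: finite_vertices_between vertices_between_def blocking_growth_def exp_blocking_def)
  finally show ?thesis .
qed

lemma nn_integral_exp_blocking_le:
  assumes h: "h \<le> n" and lam: "0 \<le> lam"
  shows "(\<integral>\<^sup>+C. ennreal (exp_blocking n v h lam C) \<partial>dla n t) \<le> ennreal (blocking_growth n v h lam ^ t)"
proof (induction t)
  case 0
  have "{w\<in>{{}}. v \<subset> w \<and> w \<subseteq> {0..<n}} = {}" by auto
  hence "blocking_weight n v {{}} = 0" by (simp add: blocking_weight_def)
  thus ?case by (cases "h = 0") (auto simp: exp_blocking_def)
next
  case (Suc t)
  let ?Q = "blocking_growth n v h lam" and ?Y = "exp_blocking n v h lam"
  have Q: "0 \<le> ?Q" using lam by (rule blocking_growth_nonneg)
  have "(\<integral>\<^sup>+C. ennreal (?Y C) \<partial>dla n (Suc t)) \<le> ennreal ?Q * (\<integral>\<^sup>+C. ennreal (?Y C) \<partial>dla n t)"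
    using nn_integral_dla_Suc_le[where g = "\<lambda>_. 0", OF _ Q] exp_blocking_step[OF _ h lam]
    by (simp add: exp_blocking_def)
  also have "\<dots> \<le> ennreal ?Q * ennreal (?Q ^ t)" using Suc by (rule mult_left_mono) simp
  finally show ?case using Q by (simp add: ennreal_mult[symmetric])
qed

lemma prob_blocking_weight_ge:
  assumes h: "h \<le> n" and lam: "0 \<le> lam"
  shows "measure_pmf.prob (dla n t) {C. eps \<le> blocking_weight n v C \<and> (\<forall>w\<in>C. card w < h)}
           \<le> blocking_growth n v h lam ^ t / exp (lam * eps)"
proof -
  let ?A = "{C. eps \<le> blocking_weight n v C \<and> (\<forall>w\<in>C. card w < h)}"
  have "emeasure (dla n t) ?A = (\<integral>\<^sup>+C. indicator ?A C \<partial>dla n t)" by simp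
  also have "\<dots> \<le> (\<integral>\<^sup>+C. ennreal (exp_blocking n v h lam C) * ennreal (1 / exp (lam * eps)) \<partial>dla n t)"
    using lam by (intro nn_integral_mono)
      (auto simp: indicator_def exp_blocking_def ennreal_mult[symmetric] intro!: ennreal_leI mult_left_mono)
  also have "\<dots> \<le> ennreal (blocking_growth n v h lam ^ t) * ennreal (1 / exp (lam * eps))"
    using nn_integral_exp_blocking_le[OF h lam] by (simp add: nn_integral_multc mult_right_mono)
  finally show ?thesis using blocking_growth_nonneg[OF lam]
    by (simp add: measure_pmf.emeasure_eq_measure ennreal_mult[symmetric] divide_nonneg_pos)
qed

section \<open>The cluster stays low\<close>

definition level_count :: "nat \<Rightarrow> nat set set \<Rightarrow> real" where
  "level_count j C = real (card {w\<in>C. card w = j})"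

definition reaches :: "nat \<Rightarrow> nat set set \<Rightarrow> bool" where
  "reaches h C \<longleftrightarrow> (\<exists>w\<in>C. h \<le> card w)"

lemma level_count_nonneg [simp]: "0 \<le> level_count j C"
  by (simp add: level_count_def)

lemma level_count_le_binomial: "dla_state n C \<Longrightarrow> level_count j C \<le> real (n choose j)"
proof -
  assume "dla_state n C"
  hence "{w\<in>C. card w = j} \<subseteq> {w. w \<subseteq> {0..<n} \<and> card w = j}" by (auto simp: dla_state_def)
  hence "card {w\<in>C. card w = j} \<le> card {w. w \<subseteq> {0..<n} \<and> card w = j}"
    by (rule card_mono[rotated]) (rule finite_subset[of _ "Pow {0..<n}"], auto)
  thus ?thesis using n_subsets[of "{0..<n}" j] by (simp add: level_count_def)
qed

lemma walk_meets_level_below_deposit: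
  assumes \<sigma>: "\<sigma> \<in> cube_orders n" and C: "dla_state n C" "{0..<n} \<notin> C"
    and d: "card (deposit C (walk_of n \<sigma>)) = Suc j"
  shows "1 \<le> (\<Sum>u\<in>{u\<in>C. card u = j}. of_bool (chain_vertex n \<sigma> (n - card u) = u) :: real)"
proof -
  obtain u where "u \<in> C" "card u = j" "chain_vertex n \<sigma> (n - card u) = u"
    using deposit_on_walk(5)[OF \<sigma> C] d by auto
  thus ?thesis using finite_dla_state[OF C(1)]
    by (intro member_le_sum[of u, THEN order.trans[rotated]]) auto
qed

text \<open>The factor \<open>1\<close> keeps the shape \<open>c * f C + g C\<close> of the hypothesis of \<open>nn_integral_dla_Suc_le\<close>.\<close>

lemma nn_integral_dla_step_level_le:
  assumes C: "dla_state n C" and F: "0 \<le> F C"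
    and step: "\<And>\<sigma>. \<sigma> \<in> cube_orders n \<Longrightarrow> {0..<n} \<notin> C \<Longrightarrow> F (insert (deposit C (walk_of n \<sigma>)) C)
              \<le> F C + (\<Sum>u\<in>{u\<in>C. card u = j}. of_bool (chain_vertex n \<sigma> (n - card u) = u))"
  shows "(\<integral>\<^sup>+C'. ennreal (F C') \<partial>dla_step n C) \<le> ennreal (1 * F C + level_count j C / real (n choose j))"
proof (cases "{0..<n} \<in> C")
  case True
  thus ?thesis by (simp add: dla_step_def level_count_def ennreal_leI)
next
  case False
  let ?U = "{u\<in>C. card u = j}"
  have U: "finite ?U" "\<And>u. u \<in> ?U \<Longrightarrow> u \<subseteq> {0..<n}"
    using finite_dla_state[OF C] C by (auto simp: dla_state_def)
  have "(\<integral>\<^sup>+C'. ennreal (F C') \<partial>dla_step n C)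
      \<le> ennreal ((\<Sum>\<sigma>\<in>cube_orders n. F C + (\<Sum>u\<in>?U. of_bool (chain_vertex n \<sigma> (n - card u) = u) * 1))
                  / card (cube_orders n))"
    using step False F by (intro nn_integral_dla_step_le ennreal_leI) (auto intro!: add_nonneg_nonneg sum_nonneg)
  also have "(\<Sum>\<sigma>\<in>cube_orders n. F C + (\<Sum>u\<in>?U. of_bool (chain_vertex n \<sigma> (n - card u) = u) * 1))
               / card (cube_orders n)
      = F C + (\<Sum>\<sigma>\<in>cube_orders n. \<Sum>u\<in>?U. of_bool (chain_vertex n \<sigma> (n - card u) = u) * 1)
               / card (cube_orders n)"
    using finite_cube_orders cube_orders_nonempty
    by (simp add: sum.distrib add_divide_distrib card_gt_0_iff)
  also have "\<dots> = 1 * F C + level_count j C / real (n choose j)"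
  proof -
    have "(\<Sum>u\<in>?U. 1 / real (n choose card u)) = (\<Sum>u\<in>?U. 1 / real (n choose j))"
      by (rule sum.cong) auto
    also have "\<dots> = level_count j C / real (n choose j)" by (simp add: level_count_def)
    finally have "(\<Sum>u\<in>?U. 1 / real (n choose card u)) = level_count j C / real (n choose j)" .
    thus ?thesis using average_walks_through[OF U, of "\<lambda>_. 1"] by simp
  qed
  finally show ?thesis .
qed

lemma level_count_step:
  assumes "dla_state n C"
  shows "(\<integral>\<^sup>+C'. ennreal (level_count (Suc j) C') \<partial>dla_step n C)
           \<le> ennreal (1 * level_count (Suc j) C + level_count j C / real (n choose j))"
proof (rule nn_integral_dla_step_level_le[OF assms])
  fix \<sigma> assume \<sigma>: "\<sigma> \<in> cube_orders n" and full: "{0..<n} \<notin> C"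
  define d where "d = deposit C (walk_of n \<sigma>)"
  have "d \<notin> C" using deposit_on_walk(1)[OF \<sigma> assms full] by (simp add: d_def)
  hence "{w\<in>insert d C. card w = Suc j} = (if card d = Suc j then insert d else id) {w\<in>C. card w = Suc j}"
    by auto
  hence "level_count (Suc j) (insert d C) = level_count (Suc j) C + of_bool (card d = Suc j)"
    using \<open>d \<notin> C\<close> finite_dla_state[OF assms] by (simp add: level_count_def)
  also have "\<dots> \<le> level_count (Suc j) C + (\<Sum>u\<in>{u\<in>C. card u = j}. of_bool (chain_vertex n \<sigma> (n - card u) = u))"
    using walk_meets_level_below_deposit[OF \<sigma> assms full] by (auto simp: d_def sum_nonneg)
  finally show "level_count (Suc j) (insert (deposit C (walk_of n \<sigma>)) C) \<le> \<dots>" by (simp add: d_def)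
qed (simp add: level_count_def)

lemma reaches_step:
  assumes "dla_state n C"
  shows "(\<integral>\<^sup>+C'. ennreal (of_bool (reaches (Suc j) C')) \<partial>dla_step n C)
           \<le> ennreal (1 * of_bool (reaches (Suc j) C) + level_count j C / real (n choose j))"
proof (rule nn_integral_dla_step_level_le[OF assms])
  fix \<sigma> assume \<sigma>: "\<sigma> \<in> cube_orders n" and full: "{0..<n} \<notin> C"
  define d where "d = deposit C (walk_of n \<sigma>)"
  let ?parents = "\<Sum>u\<in>{u\<in>C. card u = j}. of_bool (chain_vertex n \<sigma> (n - card u) = u) :: real"
  have "0 \<le> ?parents" by (intro sum_nonneg) simp
  moreover have "of_bool (reaches (Suc j) (insert d C)) \<le> ?parents" if "\<not> reaches (Suc j) C"
  proof (cases "Suc j \<le> card d")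
    case True
    obtain u where "u \<in> C" "card u = card d - 1"
      using deposit_on_walk(5)[OF \<sigma> assms full] by (auto simp: d_def)
    hence "card d = Suc j" using that True by (auto simp: reaches_def)
    thus ?thesis using walk_meets_level_below_deposit[OF \<sigma> assms full] by (simp add: d_def)
  qed (use that \<open>0 \<le> ?parents\<close> in \<open>auto simp: reaches_def\<close>)
  ultimately show "of_bool (reaches (Suc j) (insert (deposit C (walk_of n \<sigma>)) C))
      \<le> of_bool (reaches (Suc j) C) + ?parents"
    by (cases "reaches (Suc j) C") (auto simp: d_def reaches_def)
qed simp

lemma nn_integral_dla_Suc_level_le:
  assumes step: "\<And>C. dla_state n C \<Longrightarrow>
      (\<integral>\<^sup>+C'. ennreal (f C') \<partial>dla_step n C) \<le> ennreal (1 * f C + level_count j C / real (n choose j))"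
    and f: "\<And>C. 0 \<le> f C"
  shows "(\<integral>\<^sup>+C. ennreal (f C) \<partial>dla n (Suc t))
           \<le> (\<integral>\<^sup>+C. ennreal (f C) \<partial>dla n t)
              + (\<integral>\<^sup>+C. ennreal (level_count j C) \<partial>dla n t) * ennreal (1 / real (n choose j))"
proof -
  have "(\<integral>\<^sup>+C. ennreal (f C) \<partial>dla n (Suc t))
      \<le> ennreal 1 * (\<integral>\<^sup>+C. ennreal (f C) \<partial>dla n t)
         + (\<integral>\<^sup>+C. ennreal (level_count j C / real (n choose j)) \<partial>dla n t)"
    by (rule nn_integral_dla_Suc_le[OF step]) (simp_all add: f level_count_def)
  also have "(\<integral>\<^sup>+C. ennreal (level_count j C / real (n choose j)) \<partial>dla n t)
      = (\<integral>\<^sup>+C. ennreal (level_count j C) \<partial>dla n t) * ennreal (1 / real (n choose j))"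
    by (subst nn_integral_multc[symmetric]) (simp_all add: level_count_def ennreal_mult[symmetric])
  finally show ?thesis by simp
qed

definition growth_bound :: "real \<Rightarrow> nat \<Rightarrow> nat \<Rightarrow> real" where
  "growth_bound B m t = real t ^ (m + 1) / (fact (m + 1) * B ^ m)"

lemma growth_bound_nonneg: "0 < B \<Longrightarrow> 0 \<le> growth_bound B m t"
  by (simp add: growth_bound_def)

lemma power_plus_one_ge: "0 \<le> (x::real) \<Longrightarrow> x ^ (p + 1) + real (p + 1) * x ^ p \<le> (x + 1) ^ (p + 1)"
proof (induction p)
  case (Suc p)
  have "x ^ (Suc p + 1) + real (Suc p + 1) * x ^ Suc p \<le> (x + 1) * (x ^ (p + 1) + real (p + 1) * x ^ p)"
    using Suc.prems by (simp add: algebra_simps)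
  also have "\<dots> \<le> (x + 1) * (x + 1) ^ (p + 1)" using Suc by (intro mult_left_mono) auto
  finally show ?case by simp
qed simp

lemma growth_bound_Suc:
  assumes B: "0 < B" "B \<le> B'"
  shows "growth_bound B (Suc m) t + growth_bound B m t * (1 / B') \<le> growth_bound B (Suc m) (Suc t)"
proof -
  define D where "D = fact (m + 2) * B ^ (m + 1)"
  have D: "D = real (m + 2) * (fact (m + 1) * B ^ (m + 1))"
    unfolding D_def by (simp add: numeral_2_eq_2)
  have "growth_bound B m t * (1 / B') \<le> growth_bound B m t * (1 / B)"
    using B growth_bound_nonneg[OF B(1)] by (intro mult_left_mono) (auto simp: field_simps)
  also have "\<dots> = real t ^ (m + 1) / (fact (m + 1) * B ^ (m + 1))"
    by (simp add: growth_bound_def)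
  also have "\<dots> = real (m + 2) * real t ^ (m + 1) / D"
    unfolding D by (rule mult_divide_mult_cancel_left[symmetric]) simp
  finally have "growth_bound B (Suc m) t + growth_bound B m t * (1 / B')
      \<le> (real t ^ (m + 2) + real (m + 2) * real t ^ (m + 1)) / D"
    unfolding growth_bound_def D_def by (simp add: add_divide_distrib)
  also have "\<dots> \<le> (real t + 1) ^ (m + 2) / D"
    using power_plus_one_ge[of "real t" "m + 1"] B(1) by (intro divide_right_mono) (simp_all add: D_def)
  also have "\<dots> = growth_bound B (Suc m) (Suc t)" by (simp add: growth_bound_def D_def add.commute)
  finally show ?thesis .
qed

lemma ennreal_growth_bound_recursion:
  fixes a b :: "nat \<Rightarrow> ennreal"
  assumes a0: "a 0 = 0" and step: "\<And>t. a (Suc t) \<le> a t + b t * ennreal (1 / B')"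
    and b: "\<And>t. b t \<le> ennreal (growth_bound B m t)" and B: "0 < B" "B \<le> B'"
  shows "a t \<le> ennreal (growth_bound B (Suc m) t)"
proof (induction t)
  case 0 show ?case by (simp add: a0 growth_bound_def)
next
  case (Suc t)
  have "a (Suc t) \<le> ennreal (growth_bound B (Suc m) t) + ennreal (growth_bound B m t) * ennreal (1 / B')"
    using Suc b by (intro order.trans[OF step] add_mono mult_right_mono) auto
  also have "\<dots> = ennreal (growth_bound B (Suc m) t + growth_bound B m t * (1 / B'))"
    using B growth_bound_nonneg[OF B(1)] by (simp add: ennreal_plus ennreal_mult[symmetric])
  also have "\<dots> \<le> ennreal (growth_bound B (Suc m) (Suc t))" by (rule ennreal_leI[OF growth_bound_Suc[OF B]])
  finally show ?case .
qed

lemma nn_integral_level_count_le: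
  assumes B: "0 < B" and Bi: "\<And>i. 1 \<le> i \<Longrightarrow> i \<le> m \<Longrightarrow> B \<le> real (n choose (k + i))"
  shows "(\<integral>\<^sup>+C. ennreal (level_count (k + 1 + m) C) \<partial>dla n t) \<le> ennreal (growth_bound B m t)"
  using Bi
proof (induction m arbitrary: t)
  case 0
  let ?E = "\<lambda>j s. \<integral>\<^sup>+C. ennreal (level_count j C) \<partial>dla n s"
  have parents: "?E k s * ennreal (1 / real (n choose k)) \<le> 1" for s
  proof -
    have "?E k s \<le> (\<integral>\<^sup>+C. ennreal (real (n choose k)) \<partial>dla n s)"
      by (intro nn_integral_mono_AE AE_pmfI ennreal_leI level_count_le_binomial dla_state_dla)
    hence "?E k s * ennreal (1 / real (n choose k)) \<le> ennreal (real (n choose k)) * ennreal (1 / real (n choose k))"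
      by (intro mult_right_mono) (simp_all add: measure_pmf.emeasure_space_1)
    also have "\<dots> \<le> 1" by (simp add: ennreal_mult[symmetric] ennreal_le_1)
    finally show ?thesis .
  qed
  have step: "?E (Suc k) (Suc s) \<le> ?E (Suc k) s + 1" for s
  proof -
    have "?E (Suc k) (Suc s) \<le> ?E (Suc k) s + ?E k s * ennreal (1 / real (n choose k))"
      by (rule nn_integral_dla_Suc_level_le[OF level_count_step]) simp_all
    also have "\<dots> \<le> ?E (Suc k) s + 1" using parents[of s] by (rule add_left_mono)
    finally show ?thesis .
  qed
  have "?E (Suc k) t \<le> ennreal (real t)"
  proof (induction t)
    case 0 show ?case by (simp add: level_count_def)
  next
    case (Suc t)
    have "?E (Suc k) (Suc t) \<le> ennreal (real t) + 1" using step[of t] Suc by (rule order.trans[OF _ add_right_mono])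
    thus ?case by (simp add: ennreal_plus[symmetric] add.commute)
  qed
  thus ?case by (simp add: growth_bound_def)
next
  case (Suc m)
  have "B \<le> real (n choose (k + 1 + m))" using Suc.prems[of "Suc m"] by simp
  thus ?case
    using Suc nn_integral_dla_Suc_level_le[OF level_count_step]
    by (intro ennreal_growth_bound_recursion[OF _ _ _ B]) (simp_all add: level_count_def)
qed

lemma prob_reaches_le:
  assumes B: "0 < B" and Bi: "\<And>i. 1 \<le> i \<Longrightarrow> i \<le> m \<Longrightarrow> B \<le> real (n choose (k + i))" and m: "1 \<le> m"
  shows "measure_pmf.prob (dla n t) {C. reaches (k + 1 + m) C} \<le> growth_bound B m t"
proof -
  obtain m' where m': "m = Suc m'" using m by (cases m) auto
  have "emeasure (dla n t) {C. reaches (k + 1 + m) C} = (\<integral>\<^sup>+C. indicator {C. reaches (k + 1 + m) C} C \<partial>dla n t)"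
    by simp
  also have "\<dots> = (\<integral>\<^sup>+C. ennreal (of_bool (reaches (Suc (k + 1 + m')) C)) \<partial>dla n t)"
    by (intro nn_integral_cong) (simp add: m' indicator_def)
  also have "\<dots> \<le> ennreal (growth_bound B m t)"
    unfolding m'
  proof (rule ennreal_growth_bound_recursion[OF _ nn_integral_dla_Suc_level_le[OF reaches_step]
        nn_integral_level_count_le[OF B] B])
    show "(\<integral>\<^sup>+C. ennreal (of_bool (reaches (Suc (k + 1 + m')) C)) \<partial>dla n 0) = 0"
      by (simp add: reaches_def)
    show "B \<le> real (n choose (k + 1 + m'))" using Bi[of m] m' by simp
  qed (simp_all add: Bi m')
  finally show ?thesis using growth_bound_nonneg[OF B] by (simp add: measure_pmf.emeasure_eq_measure)
qed

section \<open>Estimating the growth factor\<close>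

lemma binomial_Suc_ratio: "Suc k * (n choose Suc k) = (n - k) * (n choose k)"
  by (simp only: binomial_absorption binomial_absorb_comp)

lemma binomial_ge_self:
  assumes "0 < i" "i < N"
  shows "N \<le> N choose i"
proof (cases "2 * i \<le> N")
  case True
  have "N choose 1 \<le> N choose i" by (rule binomial_mono) (use assms True in auto)
  thus ?thesis by simp
next
  case False
  have "N choose 1 \<le> N choose (N - i)" by (rule binomial_mono) (use assms False in auto)
  thus ?thesis using binomial_symmetric[of i N] assms by simp
qed

lemma exp_minus_one_le: "0 \<le> (x::real) \<Longrightarrow> exp x - 1 \<le> x * exp x"
  using exp_ge_add_one_self[of "-x"] mult_right_mono[of "1 - x" "exp (-x)" "exp x"]
  by (simp add: exp_minus field_simps)

lemma blocking_jump_le: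
  assumes w: "w \<in> vertices_between n v h" and h: "h \<le> n" and lam: "0 \<le> lam"
  shows "blocking_jump n v lam w
           \<le> lam * exp (lam / real (n - card v)) / real ((n - card v) choose (card w - card v))"
proof -
  define b where "b = (n - card v) choose (card w - card v)"
  have w': "v \<subset> w" "w \<subseteq> {0..<n}" "card w < h" using w by (auto simp: vertices_between_def)
  hence "card v < card w" using psubset_card_mono finite_subset by blast
  hence b: "n - card v \<le> b" "0 < n - card v"
    using w' h unfolding b_def by (auto intro: binomial_ge_self)
  hence x: "0 \<le> lam / real b" "lam / real b \<le> lam / real (n - card v)"
    using lam by (auto intro!: divide_left_mono)
  have "blocking_jump n v lam w \<le> lam / real b * exp (lam / real b)"
    unfolding blocking_jump_def b_def[symmetric] by (rule exp_minus_one_le[OF x(1)])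
  also have "\<dots> \<le> lam / real b * exp (lam / real (n - card v))"
    using x by (intro mult_left_mono) auto
  finally show ?thesis by (simp add: b_def)
qed

lemma card_supersets_of_card:
  assumes v: "v \<subseteq> {0..<n}" and j: "card v \<le> j"
  shows "card {w. v \<subseteq> w \<and> w \<subseteq> {0..<n} \<and> card w = j} = (n - card v) choose (j - card v)"
proof -
  have fv: "finite v" using v finite_subset by blast
  let ?X = "{w. v \<subseteq> w \<and> w \<subseteq> {0..<n} \<and> card w = j}"
  let ?Y = "{B. B \<subseteq> {0..<n} - v \<and> card B = j - card v}"
  have "bij_betw (\<lambda>w. w - v) ?X ?Y"
  proof (rule bij_betw_byWitness[where f' = "\<lambda>B. B \<union> v"])
    show "(\<lambda>w. w - v) ` ?X \<subseteq> ?Y"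
    proof safe
      fix w assume "v \<subseteq> w" "w \<subseteq> {0..<n}"
      moreover from this have "finite w" by (simp add: finite_subset)
      ultimately show "card (w - v) = card w - card v" using fv by (simp add: card_Diff_subset)
    qed auto
    show "(\<lambda>B. B \<union> v) ` ?Y \<subseteq> ?X"
    proof safe
      fix B assume B: "B \<subseteq> {0..<n} - v" "card (B) = j - card v"
      hence "finite B" "B \<inter> v = {}" using finite_subset by auto
      thus "card (B \<union> v) = j" using B fv j by (simp add: card_Un_disjoint)
    qed (use v in auto)
  qed auto
  hence "card ?X = card ?Y" by (rule bij_betw_same_card)
  also have "\<dots> = card ({0..<n} - v) choose (j - card v)" by (rule n_subsets) simp
  finally show ?thesis using v fv by (simp add: card_Diff_subset)
qed

lemma blocking_growth_le:
  assumes v: "v \<subseteq> {0..<n}" and h: "h \<le> n" and lam: "0 \<le> lam"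
  shows "blocking_growth n v h lam
           \<le> 1 + lam * exp (lam / real (n - card v)) * (\<Sum>j\<in>{card v + 1..<h}. 1 / real (n choose j))"
proof -
  let ?k = "card v" and ?W = "vertices_between n v h" and ?c = "lam * exp (lam / real (n - card v))"
  have levels: "card ` ?W \<subseteq> {?k + 1..<h}"
  proof
    fix j assume "j \<in> card ` ?W"
    then obtain w where w: "v \<subset> w" "w \<subseteq> {0..<n}" "card w < h" "j = card w"
      by (auto simp: vertices_between_def)
    hence "?k < card w" using psubset_card_mono finite_subset by blast
    thus "j \<in> {?k + 1..<h}" using w by simp
  qed
  have level: "(\<Sum>w\<in>{w\<in>?W. card w = j}. ?c / real ((n - ?k) choose (card w - ?k)) / real (n choose card w))
      = ?c * (1 / real (n choose j))" if j: "j \<in> {?k + 1..<h}" for j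
  proof -
    have "{w\<in>?W. card w = j} = {w. v \<subseteq> w \<and> w \<subseteq> {0..<n} \<and> card w = j}"
      using j by (auto simp: vertices_between_def)
    hence "card {w\<in>?W. card w = j} = (n - ?k) choose (j - ?k)"
      using card_supersets_of_card[OF v, of j] j by simp
    moreover have "0 < (n - ?k) choose (j - ?k)"
      by (intro zero_less_binomial diff_le_mono) (use j h in auto)
    ultimately show ?thesis by simp
  qed
  have "(\<Sum>w\<in>?W. blocking_jump n v lam w / real (n choose card w))
      \<le> (\<Sum>w\<in>?W. ?c / real ((n - ?k) choose (card w - ?k)) / real (n choose card w))"
    using h lam by (intro sum_mono divide_right_mono blocking_jump_le) auto
  also have "\<dots> = (\<Sum>j\<in>{?k + 1..<h}. \<Sum>w\<in>{w\<in>?W. card w = j}.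
                     ?c / real ((n - ?k) choose (card w - ?k)) / real (n choose card w))"
    by (rule sum.group[OF finite_vertices_between _ levels, symmetric]) simp
  also have "\<dots> = (\<Sum>j\<in>{?k + 1..<h}. ?c * (1 / real (n choose j)))"
    by (rule sum.cong[OF refl level])
  finally show ?thesis by (simp add: blocking_growth_def sum_distrib_left)
qed

lemma sum_half_powers_le: "(\<Sum>j\<in>{a..<b}. (1/2::real) ^ (j - a)) \<le> 2"
proof -
  have "(\<Sum>j\<in>{a..<b}. (1/2::real) ^ (j - a)) = (\<Sum>i<b - a. (1/2) ^ i)"
    by (subst sum.atLeastLessThan_shift_0) (simp add: lessThan_atLeast0)
  also have "\<dots> = 2 - 2 * (1/2) ^ (b - a)" by (simp add: sum_gp_strict)
  finally show ?thesis by simp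
qed

lemma binomial_Suc_ge_double:
  assumes "3 * j + 2 \<le> n"
  shows "2 * real (n choose j) \<le> real (n choose Suc j)"
proof -
  have ratio: "real (Suc j) * real (n choose Suc j) = real (n - j) * real (n choose j)"
    using binomial_Suc_ratio[of j n] by (metis of_nat_mult)
  have "2 * (j + 1) \<le> n - j" using assms by arith
  hence "real (Suc j) * 2 \<le> real (n - j)" using of_nat_mono[of "2 * (j + 1)" "n - j"] by simp
  hence "real (Suc j) * 2 * real (n choose j) \<le> real (n - j) * real (n choose j)"
    by (rule mult_right_mono) simp
  hence "real (Suc j) * (2 * real (n choose j)) \<le> real (n - j) * real (n choose j)"
    by (simp only: mult.assoc)
  thus ?thesis unfolding ratio[symmetric] by (rule mult_left_le_imp_le) simp
qed

text \<open>Below level \<open>n / 3\<close> the binomial coefficients at least double from one level to the next.\<close>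

lemma binomial_ratio_le:
  assumes kj: "k + 2 \<le> j" and jn: "3 * j \<le> n + 1" and kn: "k + 1 < n"
  shows "real (n choose (k + 1)) / real (n choose j)
           \<le> (real k + 2) / (real n - real k - 1) * (1/2) ^ (j - (k + 2))"
  using kj jn
proof (induction j rule: dec_induct)
  case base
  have "real (Suc (k + 1)) * real (n choose Suc (k + 1)) = real (n - (k + 1)) * real (n choose (k + 1))"
    using binomial_Suc_ratio[of "k + 1" n] by (metis of_nat_mult)
  moreover have "real (n - (k + 1)) = real n - real k - 1" using kn by (simp add: of_nat_diff)
  moreover have "Suc (k + 1) = k + 2" by simp
  ultimately have "(real k + 2) * real (n choose (k + 2)) = (real n - real k - 1) * real (n choose (k + 1))"
    by (simp add: algebra_simps)
  moreover have "0 < n choose (k + 2)" "0 < real n - real k - 1" using base kn by simp_all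
  ultimately show ?case by (simp add: field_simps)
next
  case (step i)
  have i: "3 * i + 2 \<le> n" using step.prems by simp
  have "real (n choose (k + 1)) / real (n choose Suc i) \<le> real (n choose (k + 1)) / (2 * real (n choose i))"
    using binomial_Suc_ge_double[OF i] i by (intro divide_left_mono) auto
  also have "\<dots> = (1/2) * (real (n choose (k + 1)) / real (n choose i))" by simp
  also have "\<dots> \<le> (1/2) * ((real k + 2) / (real n - real k - 1) * (1/2) ^ (i - (k + 2)))"
    using step.IH step.prems by (intro mult_left_mono) simp_all
  also have "\<dots> = (real k + 2) / (real n - real k - 1) * (1/2) ^ (Suc i - (k + 2))"
  proof -
    have "Suc i - (k + 2) = Suc (i - (k + 2))" by (rule Suc_diff_le[OF step.hyps(1)])
    hence half: "(1/2::real) ^ (Suc i - (k + 2)) = (1/2) * (1/2) ^ (i - (k + 2))"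
      by (simp only: power_Suc)
    show ?thesis unfolding half by (rule mult.left_commute)
  qed
  finally show ?case .
qed

lemma sum_inverse_binomial_le:
  assumes h: "3 * h \<le> n" and kh: "k + 1 < h"
  shows "(\<Sum>j\<in>{k + 1..<h}. 1 / real (n choose j))
           \<le> (1 + 2 * ((real k + 2) / (real n - real k - 1))) / real (n choose (k + 1))"
proof -
  let ?B = "real (n choose (k + 1))" and ?r = "(real k + 2) / (real n - real k - 1)"
  have kn: "k + 1 < n" using h kh by linarith
  hence B: "0 < ?B" and r: "0 \<le> ?r" by simp_all
  have "{k + 1..<h} = insert (k + 1) {k + 2..<h}" using kh by auto
  hence "(\<Sum>j\<in>{k + 1..<h}. 1 / real (n choose j)) = 1 / ?B + (\<Sum>j\<in>{k + 2..<h}. 1 / real (n choose j))"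
    by simp
  also have "(\<Sum>j\<in>{k + 2..<h}. 1 / real (n choose j)) \<le> (\<Sum>j\<in>{k + 2..<h}. ?r / ?B * (1/2) ^ (j - (k + 2)))"
  proof (rule sum_mono)
    fix j assume j: "j \<in> {k + 2..<h}"
    have "?B / real (n choose j) \<le> ?r * (1/2) ^ (j - (k + 2))"
      by (rule binomial_ratio_le) (use j h kn in auto)
    hence "(?B / real (n choose j)) / ?B \<le> ?r * (1/2) ^ (j - (k + 2)) / ?B"
      using B by (intro divide_right_mono) auto
    thus "1 / real (n choose j) \<le> ?r / ?B * (1/2) ^ (j - (k + 2))"
      using B by simp
  qed
  also have "\<dots> \<le> ?r / ?B * 2"
    unfolding sum_distrib_left[symmetric] using sum_half_powers_le r B by (intro mult_left_mono) auto
  finally show ?thesis by (simp add: add_divide_distrib ac_simps)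
qed

section \<open>The bound for fixed \<open>n\<close>\<close>

lemma card_level: "card (level n k) = n choose k"
  using n_subsets[of "{0..<n}" k] by (simp add: level_def)

lemma finite_level: "finite (level n k)"
  by (rule finite_subset[of _ "Pow {0..<n}"]) (auto simp: level_def)

lemma prob_blocking_weight_level_le:
  fixes lam eps :: real
  assumes v: "v \<in> level n k" and m: "1 \<le> m" and h: "3 * (k + 1 + m) \<le> n" and lam: "0 \<le> lam"
  defines "q \<equiv> lam * exp (lam / real (n - k)) * (1 + 2 * ((real k + 2) / (real n - real k - 1)))
                 / real (n choose (k + 1))"
  shows "measure_pmf.prob (dla n t) {C. eps \<le> blocking_weight n v C \<and> (\<forall>w\<in>C. card w < k + 1 + m)}
           \<le> exp (q * real t - lam * eps)"
proof -
  let ?Q = "blocking_growth n v (k + 1 + m) lam"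
  have v': "v \<subseteq> {0..<n}" "card v = k" using v by (auto simp: level_def)
  have "0 \<le> q" using h lam unfolding q_def by (simp add: of_nat_diff)
  have "?Q \<le> 1 + lam * exp (lam / real (n - k)) * (\<Sum>j\<in>{k + 1..<k + 1 + m}. 1 / real (n choose j))"
    using blocking_growth_le[OF v'(1) _ lam, of "k + 1 + m"] h v'(2) by simp
  also have "\<dots> \<le> 1 + lam * exp (lam / real (n - k))
                         * ((1 + 2 * ((real k + 2) / (real n - real k - 1))) / real (n choose (k + 1)))"
    using sum_inverse_binomial_le[OF h] m lam by (intro add_left_mono mult_left_mono) auto
  also have "\<dots> = 1 + q" by (simp add: q_def)
  finally have "?Q ^ t \<le> exp q ^ t"
    using blocking_growth_nonneg[OF lam] \<open>0 \<le> q\<close>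
    by (intro power_mono order.trans[OF _ exp_ge_add_one_self]) auto
  hence "?Q ^ t / exp (lam * eps) \<le> exp (q * real t - lam * eps)"
    by (simp add: exp_diff divide_right_mono flip: exp_of_nat2_mult)
  moreover have "k + 1 + m \<le> n" using h by simp
  ultimately show ?thesis using prob_blocking_weight_ge[OF _ lam, of "k + 1 + m" n t eps v] by linarith
qed

lemma prob_Phi_ge_le:
  fixes lam eps :: real
  assumes m: "1 \<le> m" and h: "3 * (k + 1 + m) \<le> n" and lam: "0 \<le> lam"
  defines "B \<equiv> real (n choose (k + 1))"
  defines "q \<equiv> lam * exp (lam / real (n - k)) * (1 + 2 * ((real k + 2) / (real n - real k - 1))) / B"
  shows "measure_pmf.prob (dla n t) {C. \<exists>v \<in> level n k. eps \<le> Phi n C v}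
           \<le> growth_bound B m t + real (n choose k) * exp (q * real t - lam * eps)"
proof -
  let ?M = "dla n t" and ?H = "{C. reaches (k + 1 + m) C}"
  let ?V = "\<lambda>v. {C. eps \<le> blocking_weight n v C \<and> (\<forall>w\<in>C. card w < k + 1 + m)}"
  have "{C. \<exists>v \<in> level n k. eps \<le> Phi n C v} \<subseteq> ?H \<union> (\<Union>v\<in>level n k. ?V v)"
  proof
    fix C assume "C \<in> {C. \<exists>v \<in> level n k. eps \<le> Phi n C v}"
    then obtain v where v: "v \<in> level n k" "eps \<le> Phi n C v" by blast
    have "Phi n C v \<le> blocking_weight n v C" using v(1) by (intro Phi_le_blocking_weight) (simp add: level_def)
    hence "eps \<le> blocking_weight n v C" using v(2) by linarith
    thus "C \<in> ?H \<union> (\<Union>v\<in>level n k. ?V v)" using v(1) by (auto simp: reaches_def not_le)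
  qed
  hence "measure_pmf.prob ?M {C. \<exists>v \<in> level n k. eps \<le> Phi n C v}
      \<le> measure_pmf.prob ?M ?H + measure_pmf.prob ?M (\<Union>v\<in>level n k. ?V v)"
    by (intro order.trans[OF measure_pmf.finite_measure_mono measure_Un_le]) simp_all
  also have "measure_pmf.prob ?M ?H \<le> growth_bound B m t"
  proof (rule prob_reaches_le[OF _ _ m])
    show "0 < B" unfolding B_def using h by simp
    show "B \<le> real (n choose (k + i))" if "1 \<le> i" "i \<le> m" for i
      unfolding B_def using that h by (intro of_nat_mono binomial_mono) auto
  qed
  also have "measure_pmf.prob ?M (\<Union>v\<in>level n k. ?V v) \<le> (\<Sum>v\<in>level n k. measure_pmf.prob ?M (?V v))"
    by (rule measure_pmf.finite_measure_subadditive_finite[OF finite_level]) auto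
  also have "\<dots> \<le> (\<Sum>v\<in>level n k. exp (q * real t - lam * eps))"
    unfolding q_def B_def by (intro sum_mono prob_blocking_weight_level_le[OF _ m h lam])
  finally show ?thesis by (simp add: card_level)
qed

section \<open>Numerical estimates\<close>

lemma ln_le_of_le_exp: "0 < (x::real) \<Longrightarrow> x \<le> exp y \<Longrightarrow> ln x \<le> y"
  by (metis exp_gt_zero ln_exp ln_le_cancel_iff)

lemma exp_1_ge: "27/10 \<le> exp (1::real)"
proof -
  have "(1 + 1 / real 100) ^ 100 \<le> exp (1::real)" by (rule exp_ge_one_plus_x_over_n_power_n) auto
  moreover have "(27/10::real) \<le> (1 + 1 / real 100) ^ 100" by (simp add: power_divide)
  ultimately show ?thesis by linarith
qed

lemma exp_3_4_le: "exp (3/4::real) \<le> 214/100"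
proof -
  have "exp (3/128::real) \<le> 1 + 3/128 + (3/128)^2" by (rule exp_bound) auto
  hence "exp (3/128::real) ^ 32 \<le> (1 + 3/128 + (3/128)^2) ^ 32" by (rule power_mono) simp
  moreover have "exp (3/128::real) ^ 32 = exp (3/4)" by (simp add: exp_of_nat_mult[symmetric])
  moreover have "(1 + 3/128 + (3/128)^2::real) ^ 32 \<le> 214/100" by (simp add: power_divide)
  ultimately show ?thesis by linarith
qed

lemma ln_2_le: "ln (2::real) \<le> 7/10"
proof -
  have "(1 + (7/10) / real 50) ^ 50 \<le> exp (7/10::real)" by (rule exp_ge_one_plus_x_over_n_power_n) auto
  moreover have "(2::real) \<le> (1 + (7/10) / real 50) ^ 50" by (simp add: power_divide)
  ultimately show ?thesis by (intro ln_le_of_le_exp) auto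
qed

lemma ln_100_le: "ln (100::real) \<le> 5"
proof -
  have "(27/10::real) ^ 5 \<le> exp 1 ^ 5" using exp_1_ge by (intro power_mono) auto
  moreover have "(100::real) \<le> (27/10) ^ 5" by (simp add: power_divide)
  moreover have "exp 1 ^ 5 = exp (5::real)" by (simp add: exp_of_nat_mult[symmetric])
  ultimately show ?thesis by (intro ln_le_of_le_exp) auto
qed

lemma neg_mult_ln_le: "0 < (x::real) \<Longrightarrow> - (x * ln x) \<le> 10/27"
proof -
  assume x: "0 < x"
  have "exp 1 * (1/x / exp 1) \<le> exp (1/x / exp 1)"
    using exp_ge_add_one_self[of "1/x / exp 1 - 1"] by (simp add: exp_diff field_simps)
  hence "ln (1/x) \<le> (1/x) / exp 1" using x by (intro ln_le_of_le_exp) auto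
  hence "x * ln (1/x) \<le> x * ((1/x) / exp 1)" using x by (intro mult_left_mono) auto
  hence "- (x * ln x) \<le> 1 / exp 1" using x by (simp add: ln_div)
  also have "\<dots> \<le> 10/27" using exp_1_ge by (simp add: field_simps)
  finally show ?thesis .
qed

lemma power_div_fact_le_exp: "0 \<le> (x::real) \<Longrightarrow> x ^ k / fact k \<le> exp x"
  using sum_le_suminf[OF summable_exp_generic[of x], of "{k}"]
  by (simp add: exp_def divide_inverse mult.commute)

lemma binomial_le_exp:
  assumes k: "0 < k" "k \<le> n"
  shows "real (n choose k) \<le> exp (real k * (1 + ln (real n / real k)))"
proof -
  have "real (n choose k) * fact k \<le> real n ^ k"
    using binomial_fact_pow[of n k] by (metis of_nat_fact of_nat_le_iff of_nat_mult of_nat_power)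
  hence "real (n choose k) \<le> real n ^ k / fact k" by (simp add: field_simps)
  also have "\<dots> \<le> real n ^ k / (real k ^ k / exp (real k))"
  proof (rule divide_left_mono)
    show "real k ^ k / exp (real k) \<le> fact k"
      using power_div_fact_le_exp[of "real k" k] by (simp add: field_simps)
  qed (use k in auto)
  also have "\<dots> = exp (real k * ln (real n / real k)) * exp (real k)"
    using k by (simp add: field_simps power_divide exp_of_nat_mult)
  also have "\<dots> = exp (real k * (1 + ln (real n / real k)))"
    by (simp add: exp_add[symmetric] algebra_simps)
  finally show ?thesis .
qed

lemma mult_one_minus_ln_mono:
  assumes x: "0 < x" "x \<le> a" "a \<le> 1"
  shows "x * (1 - ln x) \<le> a * (1 - ln (a::real))"
proof -
  have "ln (a / x) \<le> a / x - 1" using x by (intro ln_le_minus_one) simp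
  hence "x * (ln a - ln x) \<le> a - x" using x by (simp add: ln_div field_simps)
  moreover have "0 \<le> (a - x) * (- ln a)" using x by (intro mult_nonneg_nonneg) auto
  ultimately show ?thesis by (simp add: algebra_simps)
qed

lemma binomial_le_exp_entropy:
  assumes k: "real k \<le> a * real n" and a: "0 < a" "a \<le> 1"
  shows "real (n choose k) \<le> exp (real n * (a * (1 - ln a)))"
proof (cases "k = 0")
  case True
  have "ln a \<le> 0" using a by simp
  hence "0 \<le> 1 - ln a" by simp
  hence "0 \<le> a * (1 - ln a)" using a by simp
  thus ?thesis using True by simp
next
  case False
  have "a * real n \<le> real n" using a by (simp add: mult_left_le_one_le)
  hence "real k \<le> real n" using k by linarith
  hence n: "0 < n" using False by linarith
  define x where "x = real k / real n"
  have x: "0 < x" "x \<le> a" using False k n by (auto simp: x_def field_simps)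
  have "real k * (1 + ln (real n / real k)) = real n * (x * (1 - ln x))"
    using n False by (simp add: x_def ln_div field_simps)
  also have "\<dots> \<le> real n * (a * (1 - ln a))"
    using mult_one_minus_ln_mono[OF x a(2)] by (intro mult_left_mono) auto
  finally show ?thesis
    using binomial_le_exp[of k n] False \<open>real k \<le> real n\<close> by (simp add: order.trans)
qed

text \<open>With \<open>a = min (\<epsilon>\<^sup>2 / 4) (1 / 100)\<close>, the entropy exponent \<open>a (1 - ln a)\<close> of \<open>n choose k\<close>
  is beaten by the decay rate \<open>0.335 \<epsilon>\<close> of each single-vertex probability.\<close>

lemma entropy_lt:
  fixes eps :: real
  assumes e: "0 < eps" "eps \<le> 1"
  defines "a \<equiv> min (eps\<^sup>2 / 4) (1 / 100)"
  shows "a * (1 - ln a) < 335/1000 * eps"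
proof (cases "eps\<^sup>2 / 4 \<le> 1/100")
  case True
  hence a: "a = eps\<^sup>2 / 4" unfolding a_def by simp
  have "eps\<^sup>2 \<le> (1/5)\<^sup>2" using True by (simp add: power2_eq_square)
  hence e5: "eps \<le> 1/5" by (rule power2_le_imp_le) simp
  have "ln a = 2 * ln eps - 2 * ln 2"
    using e ln_realpow[of "2::real" 2] unfolding a
    by (simp add: ln_div ln_mult power2_eq_square ln_realpow[symmetric])
  hence "a * (1 - ln a) = a * (1 - (2 * ln eps - 2 * ln 2))" by simp
  also have "\<dots> = eps * (eps * (1 + 2 * ln 2) / 4 + (- (eps * ln eps)) / 2)"
    unfolding a by (simp add: power2_eq_square algebra_simps)
  also have "\<dots> \<le> eps * ((1/5) * (1 + 2 * (7/10)) / 4 + (10/27) / 2)"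
    using e5 ln_2_le neg_mult_ln_le[OF e(1)] e(1)
    by (intro mult_left_mono add_mono divide_right_mono mult_mono) auto
  also have "\<dots> < 335/1000 * eps" using e(1) by simp
  finally show ?thesis .
next
  case False
  hence a: "a = 1/100" unfolding a_def by simp
  have "(1/5)\<^sup>2 < eps\<^sup>2" using False by (simp add: power2_eq_square)
  hence "1/5 < eps" by (rule power2_less_imp_less) (use e in simp)
  have "a * (1 - ln a) = (1 + ln 100) / 100" unfolding a by (simp add: ln_div)
  also have "\<dots> \<le> 6 / 100" using ln_100_le by simp
  also have "\<dots> < 335/1000 * eps" using \<open>1/5 < eps\<close> by simp
  finally show ?thesis .
qed

lemma fact_ge_64_power: "64 ^ (q - 64) \<le> (fact q :: real)"
proof (cases "64 \<le> q")
  case True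
  thus ?thesis
  proof (induction q rule: dec_induct)
    case (step q)
    have "Suc q - 64 = Suc (q - 64)" by (rule Suc_diff_le[OF step.hyps(1)])
    hence "(64::real) ^ (Suc q - 64) = 64 * 64 ^ (q - 64)" by (simp only: power_Suc)
    also have "\<dots> \<le> real (Suc q) * fact q" using step by (intro mult_mono) auto
    finally show ?case by simp
  qed simp
qed simp

lemma fact_div_4_ge: "64 powr (real n / 4 - 65) \<le> (fact (n div 4) :: real)"
proof -
  let ?q = "n div 4"
  have q: "real n / 4 - 65 \<le> real ?q - 64" by linarith
  show ?thesis
  proof (cases "64 \<le> ?q")
    case True
    have "64 powr (real n / 4 - 65) \<le> 64 powr (real (?q - 64))"
      using q True by (intro powr_mono) (auto simp: of_nat_diff)
    also have "\<dots> \<le> fact ?q" using fact_ge_64_power[of ?q] by (simp add: powr_realpow)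
    finally show ?thesis .
  next
    case False
    have "64 powr (real n / 4 - 65) \<le> 64 powr 0" using q False by (intro powr_mono) auto
    hence "64 powr (real n / 4 - 65) \<le> 1" by simp
    thus ?thesis using fact_ge_1[of ?q, where 'a = real] by linarith
  qed
qed

lemma growth_bound_le_explicit:
  assumes T: "real T \<le> B" and B: "0 < B" "B \<le> 2 ^ n" and m: "n div 4 \<le> m + 1"
  shows "growth_bound B m T \<le> 2 ^ n / 64 powr (real n / 4 - 65)"
proof -
  have "growth_bound B m T \<le> B ^ (m + 1) / (fact (m + 1) * B ^ m)"
    unfolding growth_bound_def using T B by (intro divide_right_mono power_mono) auto
  also have "\<dots> = B / fact (m + 1)"
  proof -
    have "B ^ (m + 1) = B * B ^ m" "B ^ m \<noteq> 0" using B by simp_all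
    thus ?thesis using mult_divide_mult_cancel_right[of "B ^ m" B "fact (m + 1)"] by simp
  qed
  also have "\<dots> \<le> 2 ^ n / fact (n div 4)"
    using B m by (intro frac_le fact_mono) auto
  also have "\<dots> \<le> 2 ^ n / 64 powr (real n / 4 - 65)"
    by (rule divide_left_mono[OF fact_div_4_ge]) auto
  finally show ?thesis .
qed

lemma exponent_le_explicit:
  fixes eps B :: real and n k T :: nat
  assumes e: "0 < eps" and k: "real k < real n / 100" and n: "2000 \<le> n"
    and T: "real T \<le> eps / 4 * B" and B: "0 < B"
  defines "lam \<equiv> 3/4 * real (n - k)" and "r \<equiv> (real k + 2) / (real n - real k - 1)"
  shows "lam * exp (3/4) * (1 + 2 * r) / B * real T - lam * eps \<le> - (335/1000 * eps * real n)"
proof -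
  have den: "0 < real n - real k - 1" using k n by linarith
  have r: "0 \<le> r" "r \<le> 115/10000"
    unfolding r_def using den k n by (auto simp: field_simps)
  have lam: "3/4 * (99/100 * real n) \<le> lam" unfolding lam_def using k by (simp add: of_nat_diff)
  have "exp (3/4) * (1 + 2 * r) \<le> 214/100 * (1 + 2 * (115/10000))"
    using exp_3_4_le r by (intro mult_mono) auto
  hence c: "1 - 214/100 * (1 + 2 * (115/10000)) / 4 \<le> 1 - exp (3/4) * (1 + 2 * r) / 4"
    by (intro diff_left_mono divide_right_mono) auto
  have "lam * exp (3/4) * (1 + 2 * r) / B * real T \<le> lam * exp (3/4) * (1 + 2 * r) / B * (eps / 4 * B)"
    using T lam r B n by (intro mult_left_mono) auto
  also have "\<dots> = lam * eps * (exp (3/4) * (1 + 2 * r) / 4)" using B by (simp add: field_simps)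
  finally have "lam * exp (3/4) * (1 + 2 * r) / B * real T - lam * eps
      \<le> - (lam * eps * (1 - exp (3/4) * (1 + 2 * r) / 4))" by (simp add: algebra_simps)
  moreover have "335/1000 * eps * real n \<le> (3/4 * (99/100 * real n)) * eps * (1 - 214/100 * (1 + 2 * (115/10000)) / 4)"
    using e by (simp add: algebra_simps)
  moreover have "\<dots> \<le> lam * eps * (1 - exp (3/4) * (1 + 2 * r) / 4)"
    using lam c e by (intro mult_mono) auto
  ultimately show ?thesis by linarith
qed

lemma level_parameters:
  fixes n k :: nat
  assumes k: "100 * k < n" and n: "2000 \<le> n"
  defines "m \<equiv> n div 3 - k - 1"
  shows "1 \<le> m" "3 * (k + 1 + m) \<le> n" "n div 4 \<le> m + 1"
proof -
  have div3: "3 * (n div 3) \<le> n" "n < 3 * (n div 3) + 3" and div4: "4 * (n div 4) \<le> n" by linarith+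
  hence "k + 2 \<le> n div 3" using k n by linarith
  thus "1 \<le> m" unfolding m_def by linarith
  have h: "k + 1 + m = n div 3" using \<open>k + 2 \<le> n div 3\<close> unfolding m_def by linarith
  show "3 * (k + 1 + m) \<le> n" unfolding h by (rule div3(1))
  show "n div 4 \<le> m + 1" using h k div3 div4 n by linarith
qed

lemma prob_Phi_ge_le_explicit:
  fixes eps :: real and n k :: nat
  assumes e: "0 < eps" "eps \<le> 1" and kn: "real k / real n < min (eps\<^sup>2 / 4) (1 / 100)" and n: "2000 \<le> n"
  defines "a \<equiv> min (eps\<^sup>2 / 4) (1 / 100)"
  shows "measure_pmf.prob (dla n (nat \<lfloor>eps / 4 * real (n choose (k + 1))\<rfloor>)) {C. \<exists>v \<in> level n k. eps \<le> Phi n C v}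
     \<le> 2 ^ n / 64 powr (real n / 4 - 65) + exp (- (335/1000 * eps - a * (1 - ln a)) * real n)"
proof -
  define B where "B = real (n choose (k + 1))"
  define T where "T = nat \<lfloor>eps / 4 * B\<rfloor>"
  define m where "m = n div 3 - k - 1"
  define lam where "lam = 3/4 * real (n - k)"
  define r where "r = (real k + 2) / (real n - real k - 1)"
  have a: "0 < a" "a \<le> 1/100" using e by (auto simp: a_def)
  have "real k / real n < a" using kn by (simp add: a_def)
  hence ka: "real k < a * real n" using n by (simp add: pos_divide_less_eq)
  moreover have "a * real n \<le> 1/100 * real n" using a by (intro mult_right_mono) auto
  ultimately have k: "real k < real n / 100" by simp
  have "real (100 * k) < real n" using k by simp
  hence k100: "100 * k < n" by (simp only: of_nat_less_iff)
  have m: "1 \<le> m" "3 * (k + 1 + m) \<le> n" "n div 4 \<le> m + 1"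
    using level_parameters[OF k100 n] unfolding m_def by simp_all
  have "real (n choose (k + 1)) \<le> real ((2::nat) ^ n)" by (rule of_nat_mono[OF binomial_le_pow2])
  hence B: "0 < B" "B \<le> 2 ^ n" using m(2) unfolding B_def by simp_all
  have "0 \<le> eps / 4 * B" using e B by simp
  hence "real T = real_of_int \<lfloor>eps / 4 * B\<rfloor>" unfolding T_def by simp
  hence T: "real T \<le> eps / 4 * B" using of_int_floor_le[of "eps / 4 * B"] by linarith
  have "eps / 4 * B \<le> B" using e B by simp
  have "0 < real (n - k)" using k100 by simp
  hence lam_k: "lam / real (n - k) = 3/4" unfolding lam_def by (rule nonzero_mult_div_cancel_right[OF less_imp_neq[symmetric]])
  have "measure_pmf.prob (dla n T) {C. \<exists>v \<in> level n k. eps \<le> Phi n C v}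
    \<le> growth_bound B m T + real (n choose k) * exp (lam * exp (3/4) * (1 + 2 * r) / B * real T - lam * eps)"
    using prob_Phi_ge_le[OF m(1,2), of lam T eps] unfolding B_def[symmetric] r_def[symmetric] lam_k
    by (simp add: lam_def)
  also have "growth_bound B m T \<le> 2 ^ n / 64 powr (real n / 4 - 65)"
    using B m by (intro growth_bound_le_explicit order.trans[OF T \<open>eps / 4 * B \<le> B\<close>]) simp_all
  also have "real (n choose k) * exp (lam * exp (3/4) * (1 + 2 * r) / B * real T - lam * eps)
      \<le> exp (real n * (a * (1 - ln a))) * exp (- (335/1000 * eps * real n))"
    using binomial_le_exp_entropy[of k a n] exponent_le_explicit[OF e(1) k n T B(1)] ka a
    unfolding lam_def r_def by (intro mult_mono) auto
  also have "\<dots> = exp (- (335/1000 * eps - a * (1 - ln a)) * real n)"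
    by (simp add: exp_add[symmetric] algebra_simps)
  finally show ?thesis unfolding T_def B_def by simp
qed

lemma explicit_bound_tendsto_0:
  fixes D :: real assumes "0 < D"
  shows "(\<lambda>n. real n * (2 ^ n / 64 powr (real n / 4 - 65) + exp (- D * real n))) \<longlonglongrightarrow> 0"
proof -
  have "64 powr (real n / 4 - 65) = 2 powr (3/2 * real n - 390)" for n
    using powr_powr[of "2::real" 6 "real n / 4 - 65"] by (simp add: powr_numeral algebra_simps)
  moreover have "(\<lambda>n. real n * (2 ^ n / 2 powr (3/2 * real n - 390)) + real n * exp (- D * real n)) \<longlonglongrightarrow> 0"
    using assms by (intro tendsto_add_zero) real_asymp+
  ultimately show ?thesis by (simp add: distrib_left)
qed

lemma prob_Phi_ge_mult_tendsto_0:
  fixes eps :: real and k :: "nat \<Rightarrow> nat"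
  assumes e: "0 < eps" "eps \<le> 1" and k: "\<And>n. real (k n) / real n < min (eps\<^sup>2 / 4) (1 / 100)"
  defines "P \<equiv> \<lambda>n. measure_pmf.prob (dla n (nat \<lfloor>eps / 4 * real (n choose (k n + 1))\<rfloor>))
                    {C. \<exists>v \<in> level n (k n). eps \<le> Phi n C v}"
  shows "(\<lambda>n. real n * P n) \<longlonglongrightarrow> 0"
proof (rule tendsto_sandwich[OF _ _ tendsto_const explicit_bound_tendsto_0])
  define a where "a = min (eps\<^sup>2 / 4) (1 / 100)"
  show "0 < 335/1000 * eps - a * (1 - ln a)" using entropy_lt[OF e] by (simp add: a_def)
  show "\<forall>\<^sub>F n in sequentially. 0 \<le> real n * P n" by (simp add: P_def)
  show "\<forall>\<^sub>F n in sequentially. real n * P n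
      \<le> real n * (2 ^ n / 64 powr (real n / 4 - 65) + exp (- (335/1000 * eps - a * (1 - ln a)) * real n))"
    unfolding P_def a_def using prob_Phi_ge_le_explicit[OF e k]
    by (intro eventually_sequentiallyI[of 2000] mult_left_mono) auto
qed

lemma prob_Phi_ge_eq_0:
  assumes "1 < eps" shows "measure_pmf.prob M {C. \<exists>v \<in> V. eps \<le> Phi n C v} = 0"
proof -
  have "\<not> eps \<le> Phi n C v" for C v using Phi_le_1[of n C v] assms by linarith
  thus ?thesis by simp
qed

theorem mainTheorem7:
  fixes \<epsilon> :: real and k :: "nat \<Rightarrow> nat"
  assumes "\<epsilon> > 0"
    and "\<forall>n. real (k n) / real n < min (\<epsilon>\<^sup>2 / 4) (1 / 100)"
  shows "(\<lambda>n. measure_pmf.prob (dla n (nat \<lfloor>\<epsilon> / 4 * real (n choose (k n + 1))\<rfloor>))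
              {C. \<exists>v \<in> level n (k n). Phi n C v \<ge> \<epsilon>})
         \<in> o(\<lambda>n. 1 / real n)"
proof (rule smalloI_tendsto)
  show "\<forall>\<^sub>F n in at_top. 1 / real n \<noteq> 0" by (rule eventually_sequentiallyI[of 1]) simp
  have "(\<lambda>n. real n * measure_pmf.prob (dla n (nat \<lfloor>\<epsilon> / 4 * real (n choose (k n + 1))\<rfloor>))
              {C. \<exists>v \<in> level n (k n). Phi n C v \<ge> \<epsilon>}) \<longlonglongrightarrow> 0"
  proof (cases "\<epsilon> \<le> 1")
    case True
    thus ?thesis using prob_Phi_ge_mult_tendsto_0[OF assms(1) True] assms(2) by blast
  qed (simp add: prob_Phi_ge_eq_0)
  thus "((\<lambda>n. measure_pmf.prob (dla n (nat \<lfloor>\<epsilon> / 4 * real (n choose (k n + 1))\<rfloor>))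
              {C. \<exists>v \<in> level n (k n). Phi n C v \<ge> \<epsilon>} / (1 / real n)) \<longlongrightarrow> 0) at_top"
    by (simp add: mult.commute)
qed

end
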